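(* Under the hypotheses of the preceding setting (f proper lsc with the K\L{} property at $x^*$ with desingularizing $\varphi$ on $\Gamma_\eta(x^*,\delta)$; $(x^k)$ satisfying $\mathbf{H}_1$, $\mathbf{H}_2$, $\mathbf{H}_3$ and $\mathbf{S}(x^*,\delta,\rho)$), we have $x^k\in\underline{\Gamma}_\eta(x^*,\rho)$ for all $k$, and $(x^k)$ converges strongly to some $\bar x$ in the closed ball $\overline{B(x^*,\rho)}$. Moreover $\sum_{k=1}^\infty\|x^{k+1}-x^k\|<\infty$, $\liminf_{k\to\infty}\|\partial f(x^k)\|_-=0$, and $f(\bar x)\le\lim_{k\to\infty}f(x^k)=f(x^* )$.
   Context: $\partial f$ limiting Fréchet subdifferential, lazy slope $\|\partial f(x)\|_-=\inf_{p\in\partial f(x)}\|p\|$ ($+\infty$ if empty). K\L{} inequality on $\Gamma_\eta(x^*,\delta)=\{x:\|x-x^*\|<\delta,\ f(x^* )<f(x)<f(x^* )+\eta\}$: $\varphi'(f(x)-f(x^* ))\|\partial f(x)\|_-\ge1$, $\varphi$ continuous concave on $[0,\eta[$, $\varphi(0)=0$, $C^1$ with $\varphi'>0$ on $]0,\eta[$. $\underline{\Gamma}_\eta(x^*,r)=\{x:\|x-x^*\|<r,\ f(x^* )\le f(x)<f(x^* )+\eta\}$; $\Gamma_\eta(x^*,r)$ likewise with $f(x^* )<f(x)$. $\mathbf{H}_1$: $f(x^{k+1})+a_k\|x^{k+1}-x^k\|^2\le f(x^k)$, $a_k>0$. $\mathbf{H}_2$: $b_{k+1}\|\partial f(x^{k+1})\|_-\le\|x^{k+1}-x^k\|+\varepsilon_{k+1}$,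 $b_{k+1}>0$, $\varepsilon_{k+1}\ge0$. $\mathbf{H}_3$: (i) $a_k\ge\underline a>0$; (ii) $(b_k)\notin\ell^1$; (iii) $M:=\sup_{k\ge1}\frac1{a_kb_k}<\infty$; (iv) $(\varepsilon_k)\in\ell^1$. $\mathbf{S}(x^*,\delta,\rho)$: $\delta>\rho>0$ and (i) for each $k$, if $x^0,\dots,x^k\in\underline{\Gamma}_\eta(x^*,\rho)$ then $x^{k+1}\in\underline{\Gamma}_\eta(x^*,\delta)$; (ii) $x^0\in\Gamma_\eta(x^*,\rho)$ and $\|x^*-x^0\|+2\sqrt{\frac{f(x^0)-f(x^* )}{a_0}}+M\varphi(f(x^0)-f(x^* ))+\sum_{i=1}^\infty\varepsilon_i<\rho$. *)

theory Defs
  imports "HOL-Analysis.Analysis"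
begin

definition proper_fun :: "('a \<Rightarrow> ereal) \<Rightarrow> bool" where
  "proper_fun f \<longleftrightarrow> (\<forall>x. f x \<noteq> -\<infinity>) \<and> (\<exists>x. f x \<noteq> \<infinity>)"

definition lsc_fun :: "('a::topological_space \<Rightarrow> ereal) \<Rightarrow> bool" where
  "lsc_fun f \<longleftrightarrow> (\<forall>x xs. xs \<longlonglongrightarrow> x \<longrightarrow> f x \<le> liminf (\<lambda>n. f (xs n)))"

definition weak_conv :: "(nat \<Rightarrow> 'a::real_inner) \<Rightarrow> 'a \<Rightarrow> bool" where
  "weak_conv ps p \<longleftrightarrow> (\<forall>y. (\<lambda>n. inner (ps n) y) \<longlonglongrightarrow> inner p y)"

text \<open>Frechet subdifferential: p such that
  liminf_{y->x, y<>x} (f y - f x - <p, y - x>) / norm (y - x) >= 0, at points where f x is finite.\<close>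
definition frechet_subdiff :: "('a::real_inner \<Rightarrow> ereal) \<Rightarrow> 'a \<Rightarrow> 'a set" where
  "frechet_subdiff f x = {p. \<bar>f x\<bar> \<noteq> \<infinity> \<and>
     (\<forall>e>0. \<exists>d>0. \<forall>y. norm (y - x) < d \<longrightarrow>
        f x + ereal (inner p (y - x) - e * norm (y - x)) \<le> f y)}"

definition limiting_subdiff :: "('a::real_inner \<Rightarrow> ereal) \<Rightarrow> 'a \<Rightarrow> 'a set" where
  "limiting_subdiff f x = {p. \<exists>xs ps. xs \<longlonglongrightarrow> x \<and> (\<lambda>n. f (xs n)) \<longlonglongrightarrow> f x \<and>
     (\<forall>n. ps n \<in> frechet_subdiff f (xs n)) \<and> weak_conv ps p}"

text \<open>Lazy slope: inf of norms over the limiting subdifferential (+\<infinity> if empty).\<close>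
definition lazy_slope :: "('a::real_inner \<Rightarrow> ereal) \<Rightarrow> 'a \<Rightarrow> ereal" where
  "lazy_slope f x = (INF p\<in>limiting_subdiff f x. ereal (norm p))"

definition Gamma :: "('a::real_normed_vector \<Rightarrow> ereal) \<Rightarrow> ereal \<Rightarrow> 'a \<Rightarrow> real \<Rightarrow> 'a set" where
  "Gamma f \<eta> xs r = {x. norm (x - xs) < r \<and> f xs < f x \<and> f x < f xs + \<eta>}"

definition Gamma_low :: "('a::real_normed_vector \<Rightarrow> ereal) \<Rightarrow> ereal \<Rightarrow> 'a \<Rightarrow> real \<Rightarrow> 'a set" where
  "Gamma_low f \<eta> xs r = {x. norm (x - xs) < r \<and> f xs \<le> f x \<and> f x < f xs + \<eta>}"

definition desing :: "ereal \<Rightarrow> (real \<Rightarrow> real) \<Rightarrow> (real \<Rightarrow> real) \<Rightarrow> bool" where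
  "desing \<eta> \<phi> \<phi>' \<longleftrightarrow>
     continuous_on {s. 0 \<le> s \<and> ereal s < \<eta>} \<phi> \<and>
     concave_on {s. 0 \<le> s \<and> ereal s < \<eta>} \<phi> \<and> \<phi> 0 = 0 \<and>
     (\<forall>s. 0 < s \<and> ereal s < \<eta> \<longrightarrow> (\<phi> has_real_derivative \<phi>' s) (at s) \<and> \<phi>' s > 0) \<and>
     continuous_on {s. 0 < s \<and> ereal s < \<eta>} \<phi>'"

definition KL_at :: "('a::real_inner \<Rightarrow> ereal) \<Rightarrow> 'a \<Rightarrow> ereal \<Rightarrow> real \<Rightarrow> (real \<Rightarrow> real) \<Rightarrow> (real \<Rightarrow> real) \<Rightarrow> bool" where
  "KL_at f xs \<eta> \<delta> \<phi> \<phi>' \<longleftrightarrow> desing \<eta> \<phi> \<phi>' \<and>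
     (\<forall>x\<in>Gamma f \<eta> xs \<delta>. ereal (\<phi>' (real_of_ereal (f x - f xs))) * lazy_slope f x \<ge> 1)"

end

theory Submission
  imports Defs
begin

(* Write r_k = f(x_k) - f(xs) for the gap and d_k = |x_{k+1} - x_k| for the step length.
   The heart of the argument is the one-step estimate
       2 d_{k+1} <= M (phi(r_{k+1}) - phi(r_{k+2})) + d_k + eps_{k+1},
   obtained from the sufficient decrease H1, the relative error bound H2, the KL
   inequality and the concavity of phi (lemma KL_step_estimate).  Telescoping it bounds
   the length of the trajectory by a budget fixed at x_0; hypothesis S then keeps every
   iterate in the ball of radius rho, by induction (iterates_in_ball).  Hence the
   trajectory has finite length and converges.  Since the weights b_k are not summable
   while the right-hand sides of H2 are, the slopes have liminf 0, which by the KL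
   inequality forces f(x_k) to descend to f(xs); lower semicontinuity then bounds f
   at the limit point. *)

lemma Gamma_subset_Gamma_low: "Gamma f \<eta> xs r \<subseteq> Gamma_low f \<eta> xs r"
  unfolding Gamma_def Gamma_low_def by auto

lemma Gamma_low_mono: "r \<le> r' \<Longrightarrow> Gamma_low f \<eta> xs r \<subseteq> Gamma_low f \<eta> xs r'"
  unfolding Gamma_low_def by auto

lemma lazy_slope_nonneg: "0 \<le> lazy_slope f y"
  unfolding lazy_slope_def by (rule INF_greatest) simp

lemma desing_tangent:
  assumes D: "desing \<eta> \<phi> \<phi>'" and t: "0 < t" "ereal t < \<eta>" and s: "0 \<le> s" "ereal s < \<eta>"
  shows "\<phi> s \<le> \<phi> t + \<phi>' t * (s - t)"
proof -
  let ?A = "{s. 0 \<le> s \<and> ereal s < \<eta>}"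
  have cv: "convex_on ?A (\<lambda>x. - \<phi> x)" using D unfolding desing_def concave_on_def by auto
  have "is_interval ?A" unfolding is_interval_1
    by (auto intro: le_less_trans[rotated])
  then have con: "connected ?A" by (simp add: is_interval_connected_1)
  have "open {s::real. ereal s < \<eta>}"
    by (intro open_Collect_less continuous_on_ereal continuous_on_id continuous_on_const)
  then have "open {s. 0 < s \<and> ereal s < \<eta>}"
    using open_Int[OF open_Collect_less[of "\<lambda>_. 0" id]] by (simp add: Collect_conj_eq)
  then have "{s. 0 < s \<and> ereal s < \<eta>} \<subseteq> interior ?A"
    by (rule interior_maximal[rotated]) auto
  then have ti: "t \<in> interior ?A" using t by blast
  have "(\<phi> has_real_derivative \<phi>' t) (at t)" using D t unfolding desing_def by blast
  then have dv: "((\<lambda>x. - \<phi> x) has_field_derivative - \<phi>' t) (at t within ?A)"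
    by (rule has_field_derivative_at_within[OF DERIV_minus])
  have "- \<phi>' t * (s - t) \<le> - \<phi> s - (- \<phi> t)"
    by (rule convex_on_imp_above_tangent[OF cv con ti _ dv]) (use s in simp)
  then show ?thesis by (simp add: algebra_simps)
qed

lemma desing_deriv_pos:
  "desing \<eta> \<phi> \<phi>' \<Longrightarrow> 0 < t \<Longrightarrow> ereal t < \<eta> \<Longrightarrow> 0 < \<phi>' t"
  unfolding desing_def by blast

lemma desing_nonneg:
  assumes D: "desing \<eta> \<phi> \<phi>'" and r: "0 \<le> r" "ereal r < \<eta>"
  shows "0 \<le> \<phi> r"
proof (cases "r = 0")
  case True then show ?thesis using D unfolding desing_def by simp
next
  case False
  then have "0 < r" using r by simp
  have "ereal 0 < \<eta>" using r le_less_trans[of "ereal 0" "ereal r" \<eta>] by simp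
  then have "\<phi> 0 \<le> \<phi> r + \<phi>' r * (0 - r)"
    by (intro desing_tangent[OF D \<open>0 < r\<close> r(2)]) simp_all
  moreover have "\<phi> 0 = 0" using D unfolding desing_def by simp
  moreover have "0 < \<phi>' r * r" using desing_deriv_pos[OF D \<open>0 < r\<close> r(2)] \<open>0 < r\<close> by simp
  ultimately show ?thesis by (simp add: algebra_simps)
qed

lemma desing_mono:
  assumes D: "desing \<eta> \<phi> \<phi>'" and st: "0 \<le> s" "s \<le> t" "ereal t < \<eta>" "0 < t"
  shows "\<phi> s \<le> \<phi> t"
proof -
  have "ereal s < \<eta>" using st le_less_trans[of "ereal s" "ereal t" \<eta>] by simp
  then have "\<phi> s \<le> \<phi> t + \<phi>' t * (s - t)" by (rule desing_tangent[OF D st(4,3) st(1)])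
  moreover have "0 \<le> \<phi>' t * (t - s)" using desing_deriv_pos[OF D st(4,3)] st by simp
  ultimately show ?thesis by (simp add: algebra_simps)
qed

(* Concavity makes the derivative nonincreasing; this gives a uniform lower bound on the
   slopes once the gaps stay above a positive level. *)
lemma desing_deriv_antimono:
  assumes D: "desing \<eta> \<phi> \<phi>'" and st: "0 < s" "s \<le> t" "ereal t < \<eta>"
  shows "\<phi>' t \<le> \<phi>' s"
proof -
  have s: "ereal s < \<eta>" using st le_less_trans[of "ereal s" "ereal t" \<eta>] by simp
  have "\<phi> s \<le> \<phi> t + \<phi>' t * (s - t)" using st by (intro desing_tangent[OF D _ st(3) _ s]) auto
  moreover have "\<phi> t \<le> \<phi> s + \<phi>' s * (t - s)" using st by (intro desing_tangent[OF D st(1) s]) auto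
  ultimately have "0 \<le> (\<phi>' s - \<phi>' t) * (t - s)" by (simp add: algebra_simps)
  then show ?thesis using st by (cases "s = t") (auto simp: zero_le_mult_iff)
qed

lemma twice_le_sum_if_square_le_prod:
  fixes t u v :: real
  assumes "0 \<le> u" "0 \<le> v" "t\<^sup>2 \<le> u * v"
  shows "2 * t \<le> u + v"
proof (rule power2_le_imp_le)
  have "(u + v)\<^sup>2 - (2 * t)\<^sup>2 = (u - v)\<^sup>2 + 4 * (u * v) - 4 * t\<^sup>2"
    by (simp add: power2_eq_square algebra_simps)
  then show "(2 * t)\<^sup>2 \<le> (u + v)\<^sup>2"
    using assms(3) zero_le_power2[of "u - v"] by linarith
  show "0 \<le> u + v" using assms by simp
qed

(* The one-step estimate, in purely real terms: r, r' are consecutive gaps, d, d' the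
   current and previous step lengths, s the slope at the current point and e the error. *)
lemma KL_step_estimate:
  fixes r r' a b M d d' e :: real and s :: ereal
  assumes D: "desing \<eta> \<phi> \<phi>'"
    and r: "0 \<le> r" "ereal r < \<eta>" and r': "0 \<le> r'" "ereal r' < \<eta>"
    and ab: "0 < a" "0 < b" "1 / (a * b) \<le> M"
    and nonneg: "0 \<le> d" "0 \<le> d'" "0 \<le> e" "0 \<le> s"
    and descent: "r' + a * d\<^sup>2 \<le> r"
    and KL: "0 < r \<Longrightarrow> 1 \<le> ereal (\<phi>' r) * s"
    and slope: "ereal b * s \<le> ereal (d' + e)"
  shows "2 * d \<le> M * (\<phi> r - \<phi> r') + d' + e"
proof (cases "r = 0")
  case True
  have "0 \<le> a * d\<^sup>2" using ab by simp
  then have "r' = 0" "a * d\<^sup>2 = 0" using descent r' True by linarith+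
  then show ?thesis using True ab nonneg by simp
next
  case False
  then have r0: "0 < r" using r by simp
  obtain \<sigma> where \<sigma>: "s = ereal \<sigma>" using slope nonneg(4) ab(2) by (cases s) auto
  have \<sigma>0: "0 \<le> \<sigma>" and KL\<sigma>: "1 \<le> \<phi>' r * \<sigma>" and slope\<sigma>: "b * \<sigma> \<le> d' + e"
    using nonneg(4) KL[OF r0] slope \<sigma> by simp_all
  have M0: "0 \<le> M" using ab by (smt (verit) divide_pos_pos mult_pos_pos)
  define \<Delta> where "\<Delta> = \<phi> r - \<phi> r'"
  have ad0: "0 \<le> a * d\<^sup>2" using ab by simp
  have conc: "\<phi>' r * (a * d\<^sup>2) \<le> \<Delta>"
  proof -
    have "\<phi> r' \<le> \<phi> r + \<phi>' r * (r' - r)" by (rule desing_tangent[OF D r0 r(2) r'])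
    moreover have "\<phi>' r * (a * d\<^sup>2) \<le> \<phi>' r * (r - r')"
      using descent desing_deriv_pos[OF D r0 r(2)] by (intro mult_left_mono) auto
    ultimately show ?thesis unfolding \<Delta>_def by (simp add: algebra_simps)
  qed
  have \<Delta>0: "0 \<le> \<Delta>" using conc ad0 desing_deriv_pos[OF D r0 r(2)] by (smt (verit) mult_nonneg_nonneg)
  have "a * d\<^sup>2 \<le> (\<phi>' r * \<sigma>) * (a * d\<^sup>2)" using KL\<sigma> ad0 by (simp add: mult_le_cancel_right1)
  also have "\<dots> = (\<phi>' r * (a * d\<^sup>2)) * \<sigma>" by simp
  also have "\<dots> \<le> \<Delta> * \<sigma>" using conc \<sigma>0 by (rule mult_right_mono)
  finally have "a * b * d\<^sup>2 \<le> \<Delta> * (b * \<sigma>)" using ab by (simp add: algebra_simps)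
  also have "\<dots> \<le> \<Delta> * (d' + e)" using slope\<sigma> \<Delta>0 by (rule mult_left_mono)
  finally have "d\<^sup>2 \<le> 1 / (a * b) * (\<Delta> * (d' + e))" using ab by (simp add: field_simps)
  also have "\<dots> \<le> M * (\<Delta> * (d' + e))" using ab(3) \<Delta>0 nonneg by (intro mult_right_mono) auto
  finally have "2 * d \<le> M * \<Delta> + (d' + e)"
    using M0 \<Delta>0 nonneg by (intro twice_le_sum_if_square_le_prod) (auto simp: algebra_simps)
  then show ?thesis unfolding \<Delta>_def by simp
qed

lemma telescoped_step_estimates:
  fixes d p e :: "nat \<Rightarrow> real"
  assumes "\<And>k. k < K \<Longrightarrow> 2 * d (Suc k) \<le> M * (p (Suc k) - p (Suc (Suc k))) + d k + e (Suc k)"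
  shows "(\<Sum>k<K. d (Suc k)) + d K \<le> M * (p 1 - p (Suc K)) + d 0 + (\<Sum>k<K. e (Suc k))"
  using assms
proof (induction K)
  case 0 then show ?case by simp
next
  case (Suc K)
  have "2 * d (Suc K) \<le> M * (p (Suc K) - p (Suc (Suc K))) + d K + e (Suc K)"
    using Suc.prems by simp
  moreover have "(\<Sum>k<K. d (Suc k)) + d K \<le> M * (p 1 - p (Suc K)) + d 0 + (\<Sum>k<K. e (Suc k))"
    using Suc by simp
  ultimately show ?case by (simp add: algebra_simps)
qed

lemma norm_diff_le_path_length:
  fixes x :: "nat \<Rightarrow> 'a::real_normed_vector"
  assumes "m \<le> n"
  shows "norm (x n - x m) \<le> (\<Sum>k=m..<n. norm (x (Suc k) - x k))"
  using norm_sum[of "\<lambda>k. x (Suc k) - x k" "{m..<n}"] sum_Suc_diff'[OF assms, of x] by simp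

lemma convergent_if_finite_length:
  fixes x :: "nat \<Rightarrow> 'a::{real_normed_vector, complete_space}"
  assumes "summable (\<lambda>k. norm (x (Suc k) - x k))"
  shows "convergent x"
proof -
  have "Cauchy x"
  proof (rule CauchyI)
    fix e :: real assume "0 < e"
    then obtain N where N: "\<And>m n. N \<le> m \<Longrightarrow> \<bar>\<Sum>k=m..<n. norm (x (Suc k) - x k)\<bar> < e"
      using assms unfolding summable_Cauchy by fastforce
    have "norm (x m - x n) < e" if "N \<le> m" "N \<le> n" for m n
    proof (cases "m \<le> n")
      case True
      then show ?thesis
        using norm_diff_le_path_length[OF True, of x] N[OF that(1), of n]
        by (simp add: norm_minus_commute)
    next
      case False
      then show ?thesis
        using norm_diff_le_path_length[of n m x] N[OF that(2), of m] by simp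
    qed
    then show "\<exists>M. \<forall>m\<ge>M. \<forall>n\<ge>M. norm (x m - x n) < e" by blast
  qed
  then show ?thesis by (rule Cauchy_convergent)
qed

lemma liminf_zero_if_nonsummable_weights:
  fixes s :: "nat \<Rightarrow> ereal" and b d e :: "nat \<Rightarrow> real"
  assumes s0: "\<And>k. 0 \<le> s k" and b0: "\<And>k. 0 < b (Suc k)"
    and nonsum: "\<not> summable (\<lambda>k. b (Suc k))"
    and sum_d: "summable d" and sum_e: "summable (\<lambda>k. e (Suc k))"
    and rel: "\<And>k. ereal (b (Suc k)) * s (Suc k) \<le> ereal (d k + e (Suc k))"
  shows "liminf s = 0"
proof (rule antisym)
  show "0 \<le> liminf s" by (rule Liminf_bounded) (simp add: s0)
  show "liminf s \<le> 0"
  proof (rule ccontr)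
    assume "\<not> liminf s \<le> 0"
    then obtain c where c: "0 < ereal c" "ereal c < liminf s" using ereal_dense2 by (meson not_le)
    then obtain N where N: "\<And>k. N \<le> k \<Longrightarrow> ereal c < s k"
      using less_LiminfD[OF c(2)] by (auto simp: eventually_sequentially)
    have bound: "norm (b (Suc k)) \<le> (d k + e (Suc k)) / c" if "N \<le> k" for k
    proof -
      have "ereal (b (Suc k)) * ereal c \<le> ereal (b (Suc k)) * s (Suc k)"
        using N[of "Suc k"] that b0[of k] by (intro ereal_mult_left_mono) auto
      also have "\<dots> \<le> ereal (d k + e (Suc k))" by (rule rel)
      finally have "b (Suc k) * c \<le> d k + e (Suc k)" by simp
      then show ?thesis using c(1) b0[of k] by (simp add: field_simps)
    qed
    have "summable (\<lambda>k. (d k + e (Suc k)) / c)"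
      using summable_divide[OF summable_add[OF sum_d sum_e]] .
    moreover have "eventually (\<lambda>k. norm (b (Suc k)) \<le> (d k + e (Suc k)) / c) sequentially"
      using bound by (auto simp: eventually_sequentially)
    ultimately have "summable (\<lambda>k. b (Suc k))" by (rule summable_comparison_test_ev[rotated])
    with nonsum show False ..
  qed
qed


locale KL_descent =
  fixes f :: "'a::real_inner \<Rightarrow> ereal" and xs :: 'a and \<eta> :: ereal and \<delta> \<rho> :: real
    and \<phi> \<phi>' :: "real \<Rightarrow> real"
    and x :: "nat \<Rightarrow> 'a" and a b \<epsilon> :: "nat \<Rightarrow> real"
  assumes proper: "proper_fun f"
    and KL: "KL_at f xs \<eta> \<delta> \<phi> \<phi>'"
    and H1: "\<forall>k. a k > 0 \<and> f (x (Suc k)) + ereal (a k * (norm (x (Suc k) - x k))\<^sup>2) \<le> f (x k)"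
    and H2: "\<forall>k. b (Suc k) > 0 \<and> \<epsilon> (Suc k) \<ge> 0 \<and>
               ereal (b (Suc k)) * lazy_slope f (x (Suc k)) \<le> ereal (norm (x (Suc k) - x k) + \<epsilon> (Suc k))"
    and H3ii: "\<not> summable (\<lambda>k. b (Suc k))"
    and H3iii: "bdd_above {1 / (a k * b k) | k. k \<ge> 1}"
    and H3iv: "summable (\<lambda>k. \<epsilon> (Suc k))"
    and S0: "\<delta> > \<rho>" "\<rho> > 0"
    and Si: "\<forall>k. (\<forall>i\<le>k. x i \<in> Gamma_low f \<eta> xs \<rho>) \<longrightarrow> x (Suc k) \<in> Gamma_low f \<eta> xs \<delta>"
    and Sii: "x 0 \<in> Gamma f \<eta> xs \<rho>"
      "norm (xs - x 0) + 2 * sqrt (real_of_ereal (f (x 0) - f xs) / a 0)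
         + (SUP k\<in>{1..}. 1 / (a k * b k)) * \<phi> (real_of_ereal (f (x 0) - f xs))
         + (\<Sum>i. \<epsilon> (Suc i)) < \<rho>"
begin

definition gap :: "nat \<Rightarrow> real" where "gap k = real_of_ereal (f (x k) - f xs)"
definition step :: "nat \<Rightarrow> real" where "step k = norm (x (Suc k) - x k)"
definition M :: real where "M = (SUP k\<in>{1..}. 1 / (a k * b k))"
definition E :: real where "E = (\<Sum>i. \<epsilon> (Suc i))"

(* The length budget: a bound on the length of the trajectory after its first step. *)
definition budget :: real where "budget = M * \<phi> (gap 0) + step 0 + E"

lemma desing: "desing \<eta> \<phi> \<phi>'"
  using KL unfolding KL_at_def by blast

lemma a_pos: "0 < a k" and b_pos: "0 < b (Suc k)" and eps_nonneg: "0 \<le> \<epsilon> (Suc k)"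
  using H1 H2 by blast+

lemma M_upper: "1 \<le> k \<Longrightarrow> 1 / (a k * b k) \<le> M"
  unfolding M_def
  by (rule cSUP_upper) (use H3iii in \<open>auto simp: setcompr_eq_image atLeast_def\<close>)

lemma M_nonneg: "0 \<le> M"
proof -
  have "0 < 1 / (a 1 * b 1)" using a_pos[of 1] b_pos[of 0] by simp
  then show ?thesis using M_upper[of 1] by linarith
qed

lemma partial_error_le_E: "(\<Sum>k<K. \<epsilon> (Suc k)) \<le> E"
  unfolding E_def using H3iv eps_nonneg by (intro sum_le_suminf) auto

lemma initial_budget: "norm (xs - x 0) + 2 * sqrt (gap 0 / a 0) + M * \<phi> (gap 0) + E < \<rho>"
  using Sii(2) unfolding gap_def M_def E_def .

(* The critical value is finite, since f is proper and f(xs) < f(x_0). *)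
lemma f_xs_finite: "f xs = ereal (real_of_ereal (f xs))"
proof -
  have "f xs < f (x 0)" using Sii(1) unfolding Gamma_def by blast
  moreover have "f xs \<noteq> -\<infinity>" using proper unfolding proper_fun_def by blast
  ultimately show ?thesis by (cases "f xs") auto
qed

lemma Gamma_low_gap:
  assumes "x k \<in> Gamma_low f \<eta> xs r"
  shows "f (x k) = f xs + ereal (gap k)" "0 \<le> gap k" "ereal (gap k) < \<eta>" "norm (x k - xs) < r"
proof -
  obtain c where c: "f xs = ereal c" using f_xs_finite by blast
  show "f (x k) = f xs + ereal (gap k)" "0 \<le> gap k" "ereal (gap k) < \<eta>" "norm (x k - xs) < r"
    using assms unfolding Gamma_low_def gap_def c by (cases "f (x k)"; cases \<eta>; auto)+
qed

lemma x0_in_ball: "x 0 \<in> Gamma_low f \<eta> xs \<rho>"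
  using Sii(1) Gamma_subset_Gamma_low by blast

lemma ball_subset_KL_region: "Gamma_low f \<eta> xs \<rho> \<subseteq> Gamma_low f \<eta> xs \<delta>"
  using Gamma_low_mono[of \<rho> \<delta>] S0 by simp

lemma gap0: "0 < gap 0" "ereal (gap 0) < \<eta>"
proof -
  have "f xs < f (x 0)" using Sii(1) unfolding Gamma_def by blast
  then show "0 < gap 0" using Gamma_low_gap(1)[OF x0_in_ball] f_xs_finite by (cases "f xs") auto
  show "ereal (gap 0) < \<eta>" using Gamma_low_gap(3)[OF x0_in_ball] .
qed

lemma KL_at_iterate:
  assumes "x k \<in> Gamma_low f \<eta> xs \<delta>" "0 < gap k"
  shows "1 \<le> ereal (\<phi>' (gap k)) * lazy_slope f (x k)"
proof -
  have "f xs < f (x k)"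
    using Gamma_low_gap(1)[OF assms(1)] assms(2) f_xs_finite by (cases "f xs") auto
  then have "x k \<in> Gamma f \<eta> xs \<delta>" using assms(1) unfolding Gamma_def Gamma_low_def by auto
  then show ?thesis using KL unfolding KL_at_def gap_def by blast
qed

lemma slope_lower_bound:
  assumes "x k \<in> Gamma_low f \<eta> xs \<delta>" "0 < c" "c \<le> gap k"
  shows "ereal (1 / \<phi>' c) \<le> lazy_slope f (x k)"
proof -
  have c\<eta>: "ereal (gap k) < \<eta>" by (rule Gamma_low_gap(3)[OF assms(1)])
  have "1 \<le> ereal (\<phi>' (gap k)) * lazy_slope f (x k)"
    using KL_at_iterate[OF assms(1)] assms by simp
  also have "\<dots> \<le> ereal (\<phi>' c) * lazy_slope f (x k)"
    using desing_deriv_antimono[OF desing assms(2,3) c\<eta>] lazy_slope_nonneg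
    by (intro ereal_mult_right_mono) auto
  finally have kl: "1 \<le> ereal (\<phi>' c) * lazy_slope f (x k)" .
  have "0 < \<phi>' c"
    using desing_deriv_pos[OF desing assms(2)] c\<eta> assms(3) le_less_trans[of "ereal c" "ereal (gap k)" \<eta>]
    by simp
  then show ?thesis
    using kl lazy_slope_nonneg[of f "x k"]
    by (cases "lazy_slope f (x k)") (auto simp: field_simps)
qed

lemma gap_descent:
  assumes "x k \<in> Gamma_low f \<eta> xs \<delta>" "x (Suc k) \<in> Gamma_low f \<eta> xs \<delta>"
  shows "gap (Suc k) + a k * (step k)\<^sup>2 \<le> gap k"
proof -
  obtain c where c: "f xs = ereal c" using f_xs_finite by blast
  have "f (x (Suc k)) + ereal (a k * (step k)\<^sup>2) \<le> f (x k)" using H1 unfolding step_def by blast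
  then show ?thesis
    unfolding Gamma_low_gap(1)[OF assms(1)] Gamma_low_gap(1)[OF assms(2)] c by simp
qed

lemma descent_step_estimate:
  assumes "x (Suc k) \<in> Gamma_low f \<eta> xs \<delta>" "x (Suc (Suc k)) \<in> Gamma_low f \<eta> xs \<delta>"
  shows "2 * step (Suc k) \<le> M * (\<phi> (gap (Suc k)) - \<phi> (gap (Suc (Suc k)))) + step k + \<epsilon> (Suc k)"
proof (rule KL_step_estimate[OF desing])
  show "0 \<le> gap (Suc k)" "ereal (gap (Suc k)) < \<eta>" using Gamma_low_gap[OF assms(1)] by auto
  show "0 \<le> gap (Suc (Suc k))" "ereal (gap (Suc (Suc k))) < \<eta>" using Gamma_low_gap[OF assms(2)] by auto
  show "1 / (a (Suc k) * b (Suc k)) \<le> M" by (rule M_upper) simp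
  show "gap (Suc (Suc k)) + a (Suc k) * (step (Suc k))\<^sup>2 \<le> gap (Suc k)" by (rule gap_descent[OF assms])
  show "ereal (b (Suc k)) * lazy_slope f (x (Suc k)) \<le> ereal (step k + \<epsilon> (Suc k))"
    using H2 unfolding step_def by blast
  show "0 < gap (Suc k) \<Longrightarrow> 1 \<le> ereal (\<phi>' (gap (Suc k))) * lazy_slope f (x (Suc k))"
    by (rule KL_at_iterate[OF assms(1)])
qed (use a_pos b_pos eps_nonneg lazy_slope_nonneg in \<open>auto simp: step_def\<close>)

lemma first_step:
  assumes "x 1 \<in> Gamma_low f \<eta> xs \<delta>"
  shows "step 0 \<le> sqrt (gap 0 / a 0)" "\<phi> (gap 1) \<le> \<phi> (gap 0)"
proof -
  have x0: "x 0 \<in> Gamma_low f \<eta> xs \<delta>" using x0_in_ball ball_subset_KL_region by blast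
  have desc: "gap 1 + a 0 * (step 0)\<^sup>2 \<le> gap 0" using gap_descent[OF x0] assms by simp
  have "0 \<le> gap 1" "0 \<le> a 0 * (step 0)\<^sup>2" using Gamma_low_gap(2)[OF assms] a_pos[of 0] by simp_all
  then have "a 0 * (step 0)\<^sup>2 \<le> gap 0" "gap 1 \<le> gap 0" using desc by linarith+
  then show "step 0 \<le> sqrt (gap 0 / a 0)"
    using a_pos[of 0] by (intro real_le_rsqrt) (simp add: field_simps)
  show "\<phi> (gap 1) \<le> \<phi> (gap 0)"
    using desing_mono[OF desing \<open>0 \<le> gap 1\<close> \<open>gap 1 \<le> gap 0\<close> gap0(2,1)] .
qed

lemma length_bound:
  assumes "\<And>i. i \<le> Suc K \<Longrightarrow> x i \<in> Gamma_low f \<eta> xs \<delta>"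
  shows "(\<Sum>k<K. step (Suc k)) \<le> budget"
proof -
  have "(\<Sum>k<K. step (Suc k)) + step K
          \<le> M * (\<phi> (gap 1) - \<phi> (gap (Suc K))) + step 0 + (\<Sum>k<K. \<epsilon> (Suc k))"
    by (rule telescoped_step_estimates) (intro descent_step_estimate assms; simp)
  moreover have "M * (\<phi> (gap 1) - \<phi> (gap (Suc K))) \<le> M * \<phi> (gap 0)"
  proof (rule mult_left_mono[OF _ M_nonneg])
    have "0 \<le> \<phi> (gap (Suc K))"
      using Gamma_low_gap[OF assms[of "Suc K"]] desing_nonneg[OF desing] by simp
    then show "\<phi> (gap 1) - \<phi> (gap (Suc K)) \<le> \<phi> (gap 0)" using first_step(2) assms[of 1] by simp
  qed
  moreover have "0 \<le> step K" by (simp add: step_def)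
  ultimately show ?thesis using partial_error_le_E[of K] unfolding budget_def by linarith
qed

(* Every iterate stays in the ball of radius rho: by S(i) the next iterate is in the KL
   region, and then the length bound and S(ii) pull it back into the smaller ball. *)
lemma iterates_in_ball: "x k \<in> Gamma_low f \<eta> xs \<rho>"
proof -
  have "\<forall>i\<le>K. x i \<in> Gamma_low f \<eta> xs \<rho>" for K
  proof (induction K)
    case 0 then show ?case using x0_in_ball by simp
  next
    case (Suc K)
    have next_in: "x (Suc K) \<in> Gamma_low f \<eta> xs \<delta>" using Si Suc.IH by blast
    have in_KL: "x i \<in> Gamma_low f \<eta> xs \<delta>" if "i \<le> Suc K" for i
      using that Suc.IH next_in ball_subset_KL_region by (auto simp: le_Suc_eq)
    have "norm (x (Suc K) - x 0) \<le> (\<Sum>k<Suc K. step k)"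
      using norm_diff_le_path_length[of 0 "Suc K" x]
      by (simp only: atLeast0LessThan step_def)
    also have "\<dots> = step 0 + (\<Sum>k<K. step (Suc k))" by (rule sum.lessThan_Suc_shift)
    also have "\<dots> \<le> step 0 + budget" using length_bound[OF in_KL] by simp
    finally have "norm (x (Suc K) - x 0) \<le> step 0 + budget" .
    moreover have "norm (x (Suc K) - xs) \<le> norm (x (Suc K) - x 0) + norm (xs - x 0)"
      using norm_triangle_ineq[of "x (Suc K) - x 0" "x 0 - xs"] by (simp add: norm_minus_commute)
    ultimately have "norm (x (Suc K) - xs) < \<rho>"
      using initial_budget first_step(1)[OF in_KL[of 1]] unfolding budget_def by simp
    then have "x (Suc K) \<in> Gamma_low f \<eta> xs \<rho>" using next_in unfolding Gamma_low_def by simp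
    then show ?case using Suc.IH by (auto simp: le_Suc_eq)
  qed
  then show ?thesis by blast
qed

lemma iterates_in_KL_region: "x k \<in> Gamma_low f \<eta> xs \<delta>"
  using iterates_in_ball ball_subset_KL_region by blast

lemma finite_length: "summable (\<lambda>k. norm (x (Suc k) - x k))"
proof (rule summableI_nonneg_bounded)
  fix n
  have "(\<Sum>k<n. norm (x (Suc k) - x k)) \<le> (\<Sum>k<Suc n. step k)"
    unfolding step_def by (intro sum_mono2) auto
  also have "\<dots> = step 0 + (\<Sum>k<n. step (Suc k))" by (rule sum.lessThan_Suc_shift)
  also have "\<dots> \<le> step 0 + budget" using length_bound iterates_in_KL_region by simp
  finally show "(\<Sum>k<n. norm (x (Suc k) - x k)) \<le> step 0 + budget" .
qed simp

lemma liminf_slope: "liminf (\<lambda>k. lazy_slope f (x k)) = 0"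
proof (rule liminf_zero_if_nonsummable_weights[where b = b and d = step and e = \<epsilon>])
  show "summable step" unfolding step_def[abs_def] by (rule finite_length)
  show "ereal (b (Suc k)) * lazy_slope f (x (Suc k)) \<le> ereal (step k + \<epsilon> (Suc k))" for k
    using H2 unfolding step_def by blast
qed (use H3ii H3iv b_pos lazy_slope_nonneg in auto)

(* The values decrease to the critical value: a positive limit of the gaps would, by
   slope_lower_bound, keep the slopes away from 0. *)
lemma values_converge: "(\<lambda>k. f (x k)) \<longlonglongrightarrow> f xs"
proof -
  have "decseq gap"
  proof (rule decseq_SucI)
    fix k
    have "gap (Suc k) + a k * (step k)\<^sup>2 \<le> gap k"
      using gap_descent iterates_in_KL_region by blast
    moreover have "0 \<le> a k * (step k)\<^sup>2" using a_pos[of k] by simp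
    ultimately show "gap (Suc k) \<le> gap k" by linarith
  qed
  moreover have gap_nonneg: "\<forall>k. 0 \<le> gap k" using Gamma_low_gap(2) iterates_in_ball by blast
  ultimately obtain L where L: "gap \<longlonglongrightarrow> L" "\<forall>k. L \<le> gap k" by (rule decseq_convergent)
  have "L = 0"
  proof (rule ccontr)
    assume "L \<noteq> 0"
    moreover have "0 \<le> L" using L(1) gap_nonneg by (intro LIMSEQ_le_const) auto
    ultimately have L0: "0 < L" by simp
    then have "ereal (1 / \<phi>' L) \<le> liminf (\<lambda>k. lazy_slope f (x k))"
      using slope_lower_bound iterates_in_KL_region L(2) by (intro Liminf_bounded) auto
    moreover have "0 < \<phi>' L"
      using desing_deriv_pos[OF desing L0] gap0(2) L(2) le_less_trans[of "ereal L" "ereal (gap 0)" \<eta>]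
      by simp
    ultimately show False using liminf_slope by simp
  qed
  obtain c where c: "f xs = ereal c" using f_xs_finite by blast
  have "(\<lambda>k. ereal (c + gap k)) \<longlonglongrightarrow> ereal (c + 0)"
    using tendsto_add[OF tendsto_const L(1)] \<open>L = 0\<close> by simp
  moreover have "f (x k) = ereal (c + gap k)" for k
    using Gamma_low_gap(1)[OF iterates_in_ball] c by simp
  ultimately show ?thesis using c by simp
qed

end

theorem mainTheorem9:
  fixes f :: "'a::{real_inner, complete_space} \<Rightarrow> ereal"
    and xs :: 'a and \<eta> :: ereal and \<delta> \<rho> :: real
    and \<phi> \<phi>' :: "real \<Rightarrow> real"
    and x :: "nat \<Rightarrow> 'a" and a b \<epsilon> :: "nat \<Rightarrow> real" and a_low :: real
  assumes proper: "proper_fun f" and lsc: "lsc_fun f"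
    and eta_pos: "\<eta> > 0"
    and KL: "KL_at f xs \<eta> \<delta> \<phi> \<phi>'"
    and H1: "\<forall>k. a k > 0 \<and> f (x (Suc k)) + ereal (a k * (norm (x (Suc k) - x k))\<^sup>2) \<le> f (x k)"
    and H2: "\<forall>k. b (Suc k) > 0 \<and> \<epsilon> (Suc k) \<ge> 0 \<and>
               ereal (b (Suc k)) * lazy_slope f (x (Suc k)) \<le> ereal (norm (x (Suc k) - x k) + \<epsilon> (Suc k))"
    and H3i: "a_low > 0" "\<forall>k. a k \<ge> a_low"
    and H3ii: "\<not> summable (\<lambda>k. b (Suc k))"
    and H3iii: "bdd_above {1 / (a k * b k) | k. k \<ge> 1}"
    and H3iv: "summable (\<lambda>k. \<epsilon> (Suc k))"
    and S0: "\<delta> > \<rho>" "\<rho> > 0"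
    and Si: "\<forall>k. (\<forall>i\<le>k. x i \<in> Gamma_low f \<eta> xs \<rho>) \<longrightarrow> x (Suc k) \<in> Gamma_low f \<eta> xs \<delta>"
    and Sii: "x 0 \<in> Gamma f \<eta> xs \<rho>"
      "norm (xs - x 0) + 2 * sqrt (real_of_ereal (f (x 0) - f xs) / a 0)
         + (SUP k\<in>{1..}. 1 / (a k * b k)) * \<phi> (real_of_ereal (f (x 0) - f xs))
         + (\<Sum>i. \<epsilon> (Suc i)) < \<rho>"
  shows "(\<forall>k. x k \<in> Gamma_low f \<eta> xs \<rho>) \<and>
         (\<exists>xbar. x \<longlonglongrightarrow> xbar \<and> norm (xbar - xs) \<le> \<rho> \<and>
            summable (\<lambda>k. norm (x (Suc k) - x k)) \<and>
            liminf (\<lambda>k. lazy_slope f (x k)) = 0 \<and>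
            (\<lambda>k. f (x k)) \<longlonglongrightarrow> f xs \<and> f xbar \<le> f xs)"
proof -
  interpret seq: KL_descent f xs \<eta> \<delta> \<rho> \<phi> \<phi>' x a b \<epsilon>
    using proper KL H1 H2 H3ii H3iii H3iv S0 Si Sii by unfold_locales
  obtain xbar where lim: "x \<longlonglongrightarrow> xbar"
    using convergent_if_finite_length[OF seq.finite_length] unfolding convergent_def by blast
  have "norm (xbar - xs) \<le> \<rho>"
  proof (rule LIMSEQ_le_const2)
    show "(\<lambda>k. norm (x k - xs)) \<longlonglongrightarrow> norm (xbar - xs)" by (intro tendsto_intros lim)
    show "\<exists>N. \<forall>k\<ge>N. norm (x k - xs) \<le> \<rho>"
      using seq.Gamma_low_gap(4)[OF seq.iterates_in_ball] by (meson less_imp_le)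
  qed
  moreover have "f xbar \<le> f xs"
  proof -
    have "f xbar \<le> liminf (\<lambda>k. f (x k))" using lsc lim unfolding lsc_fun_def by blast
    also have "\<dots> = f xs" by (rule lim_imp_Liminf[OF trivial_limit_sequentially seq.values_converge])
    finally show ?thesis .
  qed
  ultimately show ?thesis
    using lim seq.iterates_in_ball seq.finite_length seq.liminf_slope seq.values_converge by blast
qed
end
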